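(* Let $N_{\mathrm{rx}}, N_{\mathrm{UE}} \ge 1$ and $1 \le r \le N_{\mathrm{rx}}$ be integers. For $j = 1,\dots,N_{\mathrm{UE}}$ let $\mathbf{Q}_j \in \mathbb{C}^{N_{\mathrm{rx}}\times N_{\mathrm{rx}}}$ be Hermitian positive semidefinite matrices and $\alpha_j > 0$ real numbers. Define $$\mathbf{Q} := \mathbf{I} + \sum_{j=1}^{N_{\mathrm{UE}}} \alpha_j \mathbf{Q}_j, \qquad \mathbf{R}_i := \mathbf{Q} - \alpha_i \mathbf{Q}_i = \mathbf{I} + \sum_{j\neq i}\alpha_j \mathbf{Q}_j$$ for a fixed index $i$. For an $r \times N_{\mathrm{rx}}$ complex matrix $\mathbf{G}$ of full row rank $r$, define $\tilde{\mathbf{R}}_i(\mathbf{G}) := \mathbf{G}\mathbf{R}_i\mathbf{G}^{\mathsf H}$ and $$\overline{C}_i(\mathbf{G}) := \log_2 \det\!\Big(\mathbf{I} + \mathbf{G}\mathbf{Q}_i\mathbf{G}^{\mathsf H}\,\tilde{\mathbf{R}}_i(\mathbf{G})^{-1}\Big).$$ Then a maximizer of $\overline{C}_i(\mathbf{G})$ over all such $\mathbf{G}$ is $$\mathbf{G}_i = \big[\mathbf{Q}_i^{1/2}\mathbf{Q}^{-1/2}\big]_r\,\mathbf{Q}^{-1/2},$$ where for a matrix $\mathbf{A}$, $[\mathbf{A}]_r$ denotes the $r\times N_{\mathrm{rx}}$ matrix whose rows are the (conjugate-transposed) right singular vectors of $\mathbf{A}$ corresponding to its $r$ largest singular values.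
   Context: $\mathbf{Q}_i^{1/2}$ denotes the Hermitian positive semidefinite square root of $\mathbf{Q}_i$, and $\mathbf{Q}^{-1/2}$ the inverse of the Hermitian positive definite square root of $\mathbf{Q}$ (note $\mathbf{Q} \succeq \mathbf{I}$). If $\mathbf{A} = \mathbf{U}\boldsymbol{\Sigma}\mathbf{V}^{\mathsf H}$ is a singular value decomposition with singular values in nonincreasing order, $[\mathbf{A}]_r$ is the matrix formed by the first $r$ rows of $\mathbf{V}^{\mathsf H}$. Superscript $\mathsf H$ denotes conjugate transpose. (Interpretation: $\mathbf{Q}_j$ is the spatial covariance of the uplink channel of user $j$, $\alpha_j$ its transmit SNR, $\mathbf{G}$ a rank-$r$ receive projection for user $i$, and $\overline{C}_i$ a Jensen upper bound on the ergodic capacity of the projected system.) *)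

theory Defs
  imports "Jordan_Normal_Form.Schur_Decomposition" "Jordan_Normal_Form.DL_Rank"
begin

definition hermitian_mat :: "nat \<Rightarrow> complex mat \<Rightarrow> bool" where
  "hermitian_mat n A \<longleftrightarrow> A \<in> carrier_mat n n \<and> mat_adjoint A = A"

definition psd_mat :: "nat \<Rightarrow> complex mat \<Rightarrow> bool" where
  "psd_mat n A \<longleftrightarrow> hermitian_mat n A \<and>
     (\<forall>v \<in> carrier_vec n. 0 \<le> Re (conjugate v \<bullet> (A *\<^sub>v v)))"

definition is_psd_sqrt :: "nat \<Rightarrow> complex mat \<Rightarrow> complex mat \<Rightarrow> bool" where
  "is_psd_sqrt n S A \<longleftrightarrow> psd_mat n S \<and> S * S = A"

definition mat_inv :: "complex mat \<Rightarrow> complex mat" where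
  "mat_inv A = (SOME B. B \<in> carrier_mat (dim_row A) (dim_row A) \<and>
                        A * B = 1\<^sub>m (dim_row A) \<and> B * A = 1\<^sub>m (dim_row A))"

definition unitary_mat :: "nat \<Rightarrow> complex mat \<Rightarrow> bool" where
  "unitary_mat n U \<longleftrightarrow> U \<in> carrier_mat n n \<and> mat_adjoint U * U = 1\<^sub>m n"

definition is_svd :: "nat \<Rightarrow> complex mat \<Rightarrow> complex mat \<Rightarrow> complex mat \<Rightarrow> complex mat \<Rightarrow> bool" where
  "is_svd n A U S V \<longleftrightarrow> A \<in> carrier_mat n n \<and> unitary_mat n U \<and> unitary_mat n V \<and>
     S \<in> carrier_mat n n \<and> diagonal_mat S \<and>
     (\<forall>k<n. S $$ (k,k) \<in> \<real> \<and> 0 \<le> Re (S $$ (k,k))) \<and>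
     (\<forall>k l. k \<le> l \<longrightarrow> l < n \<longrightarrow> Re (S $$ (l,l)) \<le> Re (S $$ (k,k))) \<and>
     A = U * S * mat_adjoint V"

(* [A]_r for the SVD A = U S V^H: the first r rows of V^H *)
definition first_rows :: "nat \<Rightarrow> complex mat \<Rightarrow> complex mat" where
  "first_rows r M = mat r (dim_col M) (\<lambda>(k,l). M $$ (k,l))"

(* Jensen upper bound  log2 det (I + G Qi G^H (G Ri G^H)^{-1});
   the determinant is real positive, we take its real part *)
definition cap_bound :: "nat \<Rightarrow> complex mat \<Rightarrow> complex mat \<Rightarrow> complex mat \<Rightarrow> real" where
  "cap_bound r Qi Ri G =
     log 2 (Re (det (1\<^sub>m r + G * Qi * mat_adjoint G * mat_inv (G * Ri * mat_adjoint G))))"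

end

theory Submission
  imports Defs
begin

(* Let Q = T^2 and M = V^H T^-1. The SVD Si T^-1 = U S V^H gives M Q M^H = I and
   M Qi M^H = diag sigma, where sigma_k are the squared singular values in nonincreasing
   order; hence M Ri M^H = diag y with y_k = 1 - alpha_i sigma_k > 0. Every G of full row
   rank factors as G = Y M, and the capacity bound of G becomes
   log2 det (Y diag (y + sigma) Y^H) / det (Y diag y Y^H). By Cauchy-Binet both determinants
   are combinations of the products over r-subsets S, with the same nonnegative weights
   |det Y_S|^2, so the ratio is at most the largest ratio prod_{k in S} (1 + sigma_k / y_k),
   which is attained on the first r indices, i.e. by Y = [I_r 0], i.e. by G = [M]_r. *)

lemma assoc_mult_mat_dims:
  "dim_col A = dim_row B \<Longrightarrow> dim_col B = dim_row C \<Longrightarrow> A * B * C = A * (B * (C :: 'a::semiring_0 mat))"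
  by (rule assoc_mult_mat[of A "dim_row A" "dim_col A" B "dim_col B" C "dim_col C"]) auto

lemma mult_inverse_cancel_left:
  fixes A B X :: "'a::semiring_1 mat"
  assumes "A * B = 1\<^sub>m m" "dim_col A = dim_row B" "dim_col B = dim_row X" "dim_row X = m"
  shows "A * (B * X) = X"
  using assms by (simp flip: assoc_mult_mat_dims add: left_mult_one_mat')

lemma mat_adjoint_dim [simp]:
  "dim_row (mat_adjoint A) = dim_col A" "dim_col (mat_adjoint A) = dim_row A"
  unfolding mat_adjoint_def by (auto simp: mat_of_rows_def)

lemma mat_adjoint_carrier [simp]: "A \<in> carrier_mat m n \<Longrightarrow> mat_adjoint A \<in> carrier_mat n m"
  by auto

lemma mat_adjoint_index [simp]:
  "i < dim_col A \<Longrightarrow> j < dim_row A \<Longrightarrow> mat_adjoint A $$ (i,j) = cnj (A $$ (j,i))"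
  unfolding mat_adjoint_def by (auto simp: mat_of_rows_def)

lemma mat_adjoint_adjoint [simp]: "mat_adjoint (mat_adjoint (A :: complex mat)) = A"
  by (intro eq_matI) auto

lemma mat_adjoint_one [simp]: "mat_adjoint (1\<^sub>m n :: complex mat) = 1\<^sub>m n"
  by (intro eq_matI) auto

lemma mat_adjoint_mult:
  fixes A B :: "complex mat"
  assumes "A \<in> carrier_mat m n" "B \<in> carrier_mat n k"
  shows "mat_adjoint (A * B) = mat_adjoint B * mat_adjoint A"
  using assms by (intro eq_matI) (auto simp: scalar_prod_def mult.commute intro!: sum.cong)

lemma mat_adjoint_mult3:
  fixes A B C :: "complex mat"
  assumes "A \<in> carrier_mat m n" "B \<in> carrier_mat n k" "C \<in> carrier_mat k l"
  shows "mat_adjoint (A * B * C) = mat_adjoint C * mat_adjoint B * mat_adjoint A"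
proof -
  have "mat_adjoint (A * B * C) = mat_adjoint C * mat_adjoint (A * B)"
    by (rule mat_adjoint_mult[OF mult_carrier_mat[OF assms(1,2)] assms(3)])
  also have "mat_adjoint (A * B) = mat_adjoint B * mat_adjoint A" by (rule mat_adjoint_mult[OF assms(1,2)])
  finally show ?thesis using assms by (simp add: assoc_mult_mat_dims)
qed

lemma mat_adjoint_mult_vec_scalar_prod:
  fixes G :: "complex mat"
  assumes G: "G \<in> carrier_mat r n" and v: "v \<in> carrier_vec r" and z: "z \<in> carrier_vec n"
  shows "conjugate v \<bullet> (G *\<^sub>v z) = conjugate (mat_adjoint G *\<^sub>v v) \<bullet> z"
proof -
  have "conjugate (mat_adjoint G *\<^sub>v v) \<bullet> z = (\<Sum>l<n. \<Sum>i<r. G $$ (i,l) * cnj (v $ i) * z $ l)"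
    using G v z
    by (simp add: scalar_prod_def atLeast0LessThan mult.commute sum_distrib_left sum_distrib_right)
  also have "\<dots> = conjugate v \<bullet> (G *\<^sub>v z)"
    using G v z by (subst sum.swap) (simp add: scalar_prod_def atLeast0LessThan sum_distrib_left mult_ac)
  finally show ?thesis by simp
qed

lemma det_mat_adjoint:
  fixes A :: "complex mat"
  assumes A: "A \<in> carrier_mat n n"
  shows "det (mat_adjoint A) = cnj (det A)"
proof -
  have "mat_adjoint A = transpose_mat (map_mat cnj A)"
    using A by (intro eq_matI) auto
  then have "det (mat_adjoint A) = det (map_mat cnj A)"
    using A by (simp add: det_transpose)
  also have "\<dots> = cnj (det A)"
  proof -
    have C: "map_mat cnj A \<in> carrier_mat n n" using A by simp
    show ?thesis unfolding det_def'[OF C] det_def'[OF A]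
      by (auto simp: sum_conjugate intro!: sum.cong prod.cong) (use A permutes_in_image in fastforce)
  qed
  finally show ?thesis .
qed

lemma congruence_mult:
  fixes Y M X :: "complex mat"
  assumes "Y \<in> carrier_mat r n" "M \<in> carrier_mat n n" "X \<in> carrier_mat n n"
  shows "(Y * M) * X * mat_adjoint (Y * M) = Y * (M * X * mat_adjoint M) * mat_adjoint Y"
  using assms by (simp add: mat_adjoint_mult assoc_mult_mat_dims)

lemma mat_inv_nonsingular:
  assumes A: "A \<in> carrier_mat n n" and det: "det A \<noteq> 0"
  shows "mat_inv A \<in> carrier_mat n n" "A * mat_inv A = 1\<^sub>m n" "mat_inv A * A = 1\<^sub>m n"
proof -
  have "A \<in> Units (ring_mat TYPE(complex) n ())" by (rule det_non_zero_imp_unit[OF A det])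
  then have "\<exists>B. B \<in> carrier_mat n n \<and> A * B = 1\<^sub>m n \<and> B * A = 1\<^sub>m n"
    unfolding Units_def by (auto simp: ring_mat_def)
  from someI_ex[OF this[folded carrier_matD(1)[OF A]]]
  show "mat_inv A \<in> carrier_mat n n" "A * mat_inv A = 1\<^sub>m n" "mat_inv A * A = 1\<^sub>m n"
    unfolding mat_inv_def using A by auto
qed

lemma mat_adjoint_mat_inv_hermitian:
  assumes A: "hermitian_mat n A" and det: "det A \<noteq> 0"
  shows "mat_adjoint (mat_inv A) = mat_inv A"
proof -
  have Ac: "A \<in> carrier_mat n n" and A_adj: "mat_adjoint A = A"
    using A unfolding hermitian_mat_def by auto
  note inv = mat_inv_nonsingular[OF Ac det]
  have adj_inv: "mat_adjoint (mat_inv A) \<in> carrier_mat n n" using inv(1) by simp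
  have left_inv: "mat_adjoint (mat_inv A) * A = 1\<^sub>m n"
    using mat_adjoint_mult[OF Ac inv(1)] A_adj inv(2) by simp
  have "mat_adjoint (mat_inv A) = mat_adjoint (mat_inv A) * (A * mat_inv A)"
    using inv(2) right_mult_one_mat[OF adj_inv] by simp
  also have "\<dots> = (mat_adjoint (mat_inv A) * A) * mat_inv A"
    by (rule assoc_mult_mat[OF adj_inv Ac inv(1), symmetric])
  also have "\<dots> = mat_inv A" using left_inv inv(1) by simp
  finally show ?thesis .
qed

lemma row_nonzero_right_invertible:
  fixes M N :: "'a::semiring_1 mat"
  assumes "M \<in> carrier_mat m n" "N \<in> carrier_mat n m" "M * N = 1\<^sub>m m" "k < m"
  shows "row M k \<noteq> 0\<^sub>v n"
proof
  assume row: "row M k = 0\<^sub>v n"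
  have "1 = (M * N) $$ (k,k)" using assms(3,4) by simp
  also have "\<dots> = row M k \<bullet> col N k" using assms(1,2,4) by simp
  also have "\<dots> = 0" unfolding row using assms(2,4) by (intro scalar_prod_left_zero) simp
  finally show False by simp
qed

context vec_space
begin

lemma full_rank_span_cols:
  assumes G: "G \<in> carrier_mat n nc" and rk: "rank G = n"
  shows "span (set (cols G)) = carrier_vec n"
proof -
  obtain U where U: "maximal U (\<lambda>T. T \<subseteq> set (cols G) \<and> lin_indpt T)"
    using maximal_exists[of "(\<lambda>T. T \<subseteq> set (cols G) \<and> lin_indpt T)" "card (set (cols G))" "{}"]
    by (meson List.finite_set card_mono empty_iff empty_subsetI finite_lin_indpt2 rev_finite_subset)
  have colsC: "set (cols G) \<subseteq> carrier_vec n" using G cols_dim by blast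
  have U_sub: "U \<subseteq> set (cols G)" and li: "lin_indpt U" using U unfolding maximal_def by auto
  have U_fin: "finite U" using U_sub finite_subset by blast
  have U_card: "card U = n" using rank_card_indpt[OF G U] rk by simp
  have "basis U"
    by (rule dim_li_is_basis) (use U_fin U_sub colsC li U_card dim_is_n in auto)
  then have "span U = carrier_vec n" unfolding basis_def by simp
  then show ?thesis using span_is_monotone[OF U_sub] span_closed[OF colsC] by blast
qed

lemma mult_mat_vec_in_span_cols:
  assumes G: "G \<in> carrier_mat n nc" and u: "u \<in> carrier_vec nc"
  shows "G *\<^sub>v u \<in> span (set (cols G))"
proof -
  have colsC: "set (cols G) \<subseteq> carrier_vec n" using G cols_dim by blast
  have "lincomb_list (\<lambda>i. u $ i) (cols G) = mat_of_cols n (cols G) *\<^sub>v vec (length (cols G)) (\<lambda>i. u $ i)"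
    by (rule lincomb_list_as_mat_mult) (use colsC in auto)
  also have "mat_of_cols n (cols G) = G" using G mat_of_cols_cols[of G] by simp
  also have "vec (length (cols G)) (\<lambda>i. u $ i) = u" using G u by auto
  finally have "G *\<^sub>v u = lincomb_list (\<lambda>i. u $ i) (cols G)" by simp
  also have "\<dots> \<in> span_list (cols G)" unfolding span_list_def by blast
  also have "span_list (cols G) = span (set (cols G))" by (rule span_list_as_span[OF colsC])
  finally show ?thesis .
qed

lemma right_invertible_full_rank:
  assumes G: "G \<in> carrier_mat n nc" and B: "B \<in> carrier_mat nc n" and GB: "G * B = 1\<^sub>m n"
  shows "rank G = n"
proof -
  have colsC: "set (cols G) \<subseteq> carrier_vec n" using G cols_dim by blast
  have "w \<in> span (set (cols G))" if w: "w \<in> carrier_vec n" for w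
  proof -
    have "w = G *\<^sub>v (B *\<^sub>v w)" using assoc_mult_mat_vec[OF G B w] GB w by simp
    moreover have "B *\<^sub>v w \<in> carrier_vec nc" using B w by simp
    ultimately show ?thesis using mult_mat_vec_in_span_cols[OF G] by metis
  qed
  then have "span (set (cols G)) = carrier_vec n" using span_closed[OF colsC] by blast
  then have "span_vs (set (cols G)) = V" by simp
  then show ?thesis unfolding rank_def using dim_is_n by simp
qed

end

lemma Re_conjugate_square_pos:
  fixes w :: "complex vec"
  assumes "w \<in> carrier_vec n" "w \<noteq> 0\<^sub>v n"
  shows "0 < Re (conjugate w \<bullet> w)"
  using assms conjugate_square_greater_0_vec[of w n] comm_scalar_prod[of w n "conjugate w"]
  by (simp add: less_complex_def)

lemma full_rank_mat_adjoint_kernel: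
  fixes G :: "complex mat"
  assumes G: "G \<in> carrier_mat r n" and rk: "vec_space.rank r G = r"
    and v: "v \<in> carrier_vec r" and z: "mat_adjoint G *\<^sub>v v = 0\<^sub>v n"
  shows "v = 0\<^sub>v r"
proof -
  interpret VS: vec_space "TYPE(complex)" r .
  have colsC: "set (cols G) \<subseteq> carrier_vec r" using G cols_dim by blast
  have "conjugate v \<bullet> col G j = 0" if "j < n" for j
  proof -
    have "col G j = G *\<^sub>v unit_vec n j"
      using G that by (intro eq_vecI) auto
    then show ?thesis
      using mat_adjoint_mult_vec_scalar_prod[OF G v] z that by simp
  qed
  then have "conjugate v \<in> VS.orthogonal_complement (set (cols G))"
    using G v unfolding VS.orthogonal_complement_def by (auto simp: cols_def)
  then have "conjugate v \<bullet> v = 0"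
    using VS.full_rank_span_cols[OF G rk] VS.in_orthogonal_complement_span[OF colsC] v
    unfolding VS.orthogonal_complement_def by auto
  then show ?thesis using Re_conjugate_square_pos[OF v] by fastforce
qed

section \<open>The Loewner order \<open>A \<succeq> I\<close>\<close>

definition quad_form :: "complex mat \<Rightarrow> complex vec \<Rightarrow> complex" where
  "quad_form A w = conjugate w \<bullet> (A *\<^sub>v w)"

lemma quad_form_weighted_sum:
  fixes A :: "nat \<Rightarrow> complex mat"
  assumes "w \<in> carrier_vec n" and "\<And>j. j \<in> J \<Longrightarrow> A j \<in> carrier_mat n n"
  shows "quad_form (mat n n (\<lambda>(k,l). \<Sum>j\<in>J. c j * A j $$ (k,l))) w = (\<Sum>j\<in>J. c j * quad_form (A j) w)"
proof -
  have "quad_form (mat n n (\<lambda>(k,l). \<Sum>j\<in>J. c j * A j $$ (k,l))) w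
      = (\<Sum>j\<in>J. c j * quad_form (mat n n (\<lambda>(k,l). A j $$ (k,l))) w)"
    using assms(1) unfolding quad_form_def
    by (simp add: scalar_prod_def mult_mat_vec_def sum_distrib_left sum_distrib_right
        sum.swap[of _ J] mult_ac atLeast0LessThan)
  also have "\<dots> = (\<Sum>j\<in>J. c j * quad_form (A j) w)"
  proof (intro sum.cong refl)
    fix j assume "j \<in> J"
    then have "A j \<in> carrier_mat n n" by (rule assms(2))
    then have "mat n n (\<lambda>(k,l). A j $$ (k,l)) = A j" by (intro eq_matI) auto
    then show "c j * quad_form (mat n n (\<lambda>(k,l). A j $$ (k,l))) w = c j * quad_form (A j) w" by simp
  qed
  finally show ?thesis .
qed

lemma quad_form_congruence_diag:
  fixes M X :: "complex mat"
  assumes "M \<in> carrier_mat m n" "X \<in> carrier_mat n n" "k < m"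
  shows "(M * X * mat_adjoint M) $$ (k,k) = quad_form X (conjugate (row M k))"
  using assms unfolding quad_form_def
  by (simp add: scalar_prod_def mult_mat_vec_def sum_distrib_left sum_distrib_right
      mult_ac atLeast0LessThan) (rule sum.swap)

definition loewner_ge_one :: "nat \<Rightarrow> complex mat \<Rightarrow> bool" where
  "loewner_ge_one n A \<longleftrightarrow> A \<in> carrier_mat n n \<and>
     (\<forall>w \<in> carrier_vec n. Re (conjugate w \<bullet> w) \<le> Re (quad_form A w))"

lemma loewner_ge_one_weighted_sum:
  fixes A :: "nat \<Rightarrow> complex mat" and c :: "nat \<Rightarrow> real"
  assumes psd: "\<And>j. j \<in> J \<Longrightarrow> psd_mat n (A j)" and c: "\<And>j. j \<in> J \<Longrightarrow> 0 \<le> c j"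
  shows "loewner_ge_one n (1\<^sub>m n + mat n n (\<lambda>(k,l). \<Sum>j\<in>J. complex_of_real (c j) * A j $$ (k,l)))"
    (is "loewner_ge_one n (1\<^sub>m n + ?P)")
  unfolding loewner_ge_one_def
proof (intro conjI ballI)
  fix w :: "complex vec" assume w: "w \<in> carrier_vec n"
  have A: "A j \<in> carrier_mat n n" if "j \<in> J" for j
    using psd[OF that] unfolding psd_mat_def hermitian_mat_def by blast
  have "Re (quad_form ?P w) = (\<Sum>j\<in>J. c j * Re (quad_form (A j) w))"
    by (simp add: quad_form_weighted_sum[OF w A] Re_sum)
  also have "\<dots> \<ge> 0"
    using psd c w by (intro sum_nonneg) (simp add: psd_mat_def quad_form_def)
  finally have "0 \<le> Re (quad_form ?P w)" .
  moreover have "quad_form (1\<^sub>m n + ?P) w = conjugate w \<bullet> w + quad_form ?P w"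
    unfolding quad_form_def using w
    by (simp add: add_mult_distrib_mat_vec[of _ n n]) (rule scalar_prod_add_distrib[of _ n], auto intro!: mult_mat_vec_carrier)
  ultimately show "Re (conjugate w \<bullet> w) \<le> Re (quad_form (1\<^sub>m n + ?P) w)" by simp
qed simp

lemma loewner_ge_one_weighted_sum_remove:
  fixes A :: "nat \<Rightarrow> complex mat" and c :: "nat \<Rightarrow> real"
  assumes psd: "\<And>j. j \<in> J \<Longrightarrow> psd_mat n (A j)" and c: "\<And>j. j \<in> J \<Longrightarrow> 0 \<le> c j"
    and J: "finite J" "i \<in> J"
  shows "loewner_ge_one n (1\<^sub>m n + mat n n (\<lambda>(k,l). \<Sum>j\<in>J. complex_of_real (c j) * A j $$ (k,l))
                            - complex_of_real (c i) \<cdot>\<^sub>m A i)"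
proof -
  have Ai: "A i \<in> carrier_mat n n" using psd[OF J(2)] unfolding psd_mat_def hermitian_mat_def by blast
  have "1\<^sub>m n + mat n n (\<lambda>(k,l). \<Sum>j\<in>J. complex_of_real (c j) * A j $$ (k,l)) - complex_of_real (c i) \<cdot>\<^sub>m A i
      = 1\<^sub>m n + mat n n (\<lambda>(k,l). \<Sum>j\<in>J - {i}. complex_of_real (c j) * A j $$ (k,l))"
    using Ai J by (intro eq_matI) (auto simp: sum.remove)
  then show ?thesis using loewner_ge_one_weighted_sum[of "J - {i}" n A c] psd c by simp
qed

lemma loewner_ge_one_congruence_diag_pos:
  assumes A: "loewner_ge_one n A" and M: "M \<in> carrier_mat m n" and k: "k < m"
    and row: "row M k \<noteq> 0\<^sub>v n"
  shows "0 < Re ((M * A * mat_adjoint M) $$ (k,k))"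
proof -
  define w where "w = conjugate (row M k)"
  have w: "w \<in> carrier_vec n" "w \<noteq> 0\<^sub>v n"
    using M row unfolding w_def by auto
  have Ac: "A \<in> carrier_mat n n" using A unfolding loewner_ge_one_def by simp
  have "0 < Re (conjugate w \<bullet> w)" by (rule Re_conjugate_square_pos[OF w])
  also have "\<dots> \<le> Re (quad_form A w)" using A w(1) unfolding loewner_ge_one_def by simp
  also have "quad_form A w = (M * A * mat_adjoint M) $$ (k,k)"
    unfolding w_def by (rule quad_form_congruence_diag[OF M Ac k, symmetric])
  finally show ?thesis .
qed

lemma loewner_ge_one_congruence_det_nonzero:
  fixes G :: "complex mat"
  assumes A: "loewner_ge_one n A" and G: "G \<in> carrier_mat r n" and rk: "vec_space.rank r G = r"
  shows "det (G * A * mat_adjoint G) \<noteq> 0"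
proof
  assume det0: "det (G * A * mat_adjoint G) = 0"
  have Ac: "A \<in> carrier_mat n n" using A by (simp add: loewner_ge_one_def)
  have aG: "mat_adjoint G \<in> carrier_mat n r" using G by simp
  have "G * A * mat_adjoint G \<in> carrier_mat r r"
    by (intro mult_carrier_mat[OF mult_carrier_mat[OF G Ac] aG])
  then obtain v where v: "v \<in> carrier_vec r" "v \<noteq> 0\<^sub>v r" "(G * A * mat_adjoint G) *\<^sub>v v = 0\<^sub>v r"
    using det0 det_0_iff_vec_prod_zero_field by blast
  define w where "w = mat_adjoint G *\<^sub>v v"
  have w: "w \<in> carrier_vec n" unfolding w_def using aG v by simp
  have "(G * A * mat_adjoint G) *\<^sub>v v = G *\<^sub>v (A *\<^sub>v w)"
    unfolding w_def using assoc_mult_mat_vec[OF mult_carrier_mat[OF G Ac] aG v(1)]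
      assoc_mult_mat_vec[OF G Ac, of "mat_adjoint G *\<^sub>v v"] aG v(1) by simp
  then have "quad_form A w = conjugate v \<bullet> ((G * A * mat_adjoint G) *\<^sub>v v)"
    using mat_adjoint_mult_vec_scalar_prod[OF G v(1), of "A *\<^sub>v w"] Ac w
    unfolding quad_form_def w_def by simp
  also have "\<dots> = 0" using v by simp
  finally have "Re (conjugate w \<bullet> w) \<le> 0"
    using A w unfolding loewner_ge_one_def by fastforce
  then have "w = 0\<^sub>v n" using Re_conjugate_square_pos[OF w] by fastforce
  then show False
    using full_rank_mat_adjoint_kernel[OF G rk v(1)] v(2) unfolding w_def by simp
qed

lemma loewner_ge_one_det_nonzero:
  assumes A: "loewner_ge_one n A"
  shows "det A \<noteq> 0"
proof -
  have "A \<in> carrier_mat n n" using A unfolding loewner_ge_one_def by simp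
  moreover have "vec_space.rank n (1\<^sub>m n :: complex mat) = n"
    using vec_space.det_rank_iff[of "1\<^sub>m n" n] by simp
  ultimately show ?thesis using loewner_ge_one_congruence_det_nonzero[OF A, of "1\<^sub>m n" n] by simp
qed

section \<open>A Cauchy--Binet expansion\<close>

lemma det_congruence_diag_sum_functions:
  fixes Y :: "complex mat"
  assumes Y: "Y \<in> carrier_mat r n"
  defines "F \<equiv> {f. (\<forall>i\<in>{0..<r}. f i \<in> {0..<n}) \<and> (\<forall>i. i \<notin> {0..<r} \<longrightarrow> f i = i)}"
  shows "det (Y * mat_diag n d * mat_adjoint Y)
    = (\<Sum>f\<in>F. (\<Prod>i=0..<r. Y $$ (i, f i) * d (f i)) * det (mat\<^sub>r r r (\<lambda>i. row (mat_adjoint Y) (f i))))"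
proof -
  let ?A = "Y * mat_diag n d" and ?B = "mat_adjoint Y"
  have A: "?A \<in> carrier_mat r n" and B: "?B \<in> carrier_mat n r" using Y by auto
  have row_B: "row ?B k \<in> carrier_vec r" for k using B by (auto simp: row_def)
  have "det (?A * ?B) = (\<Sum>f\<in>F. det (mat\<^sub>r r r (\<lambda>i. ?A $$ (i, f i) \<cdot>\<^sub>v row ?B (f i))))"
    unfolding mat_mul_finsum_alt[OF A B] F_def
    by (rule det_linear_rows_sum) (use A B in auto)
  also have "\<dots> = (\<Sum>f\<in>F. (\<Prod>i=0..<r. ?A $$ (i, f i)) * det (mat\<^sub>r r r (\<lambda>i. row ?B (f i))))"
    by (intro sum.cong refl det_rows_mul) (use row_B in auto)
  also have "\<dots> = (\<Sum>f\<in>F. (\<Prod>i=0..<r. Y $$ (i, f i) * d (f i)) * det (mat\<^sub>r r r (\<lambda>i. row ?B (f i))))"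
    using Y by (intro sum.cong refl arg_cong2[where f = "(*)"] prod.cong)
      (auto simp: F_def mat_diag_mult_right[OF Y])
  finally show ?thesis .
qed

lemma det_congruence_diag_coeffs:
  fixes Y :: "complex mat"
  assumes Y: "Y \<in> carrier_mat r n"
  obtains c :: "nat set \<Rightarrow> complex"
  where "\<And>S. c S \<noteq> 0 \<Longrightarrow> S \<subseteq> {0..<n} \<and> card S = r"
    and "\<And>d. det (Y * mat_diag n d * mat_adjoint Y) = (\<Sum>S\<in>Pow {0..<n}. c S * prod d S)"
proof -
  define F where "F \<equiv> {f. (\<forall>i\<in>{0..<r}. f i \<in> {0..<n}) \<and> (\<forall>i. i \<notin> {0..<r} \<longrightarrow> f i = i)}"
  define w where "w f = (\<Prod>i=0..<r. Y $$ (i, f i)) * det (mat\<^sub>r r r (\<lambda>i. row (mat_adjoint Y) (f i)))"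
    for f :: "nat \<Rightarrow> nat"
  define c where "c S = (\<Sum>f\<in>{f\<in>F. f ` {0..<r} = S}. w f)" for S
  have w_inj: "inj_on f {0..<r}" if "w f \<noteq> 0" for f
  proof (rule ccontr)
    assume "\<not> inj_on f {0..<r}"
    then obtain i j where "i < r" "j < r" "i \<noteq> j" "f i = f j" unfolding inj_on_def by auto
    then have "det (mat\<^sub>r r r (\<lambda>i. row (mat_adjoint Y) (f i))) = 0"
      by (intro det_identical_rows[of _ r i j]) auto
    then show False using that unfolding w_def by simp
  qed
  have F_fin: "finite F" unfolding F_def by (rule finite_bounded_functions) auto
  have F_img: "(\<lambda>f. f ` {0..<r}) ` F \<subseteq> Pow {0..<n}" unfolding F_def by auto
  show ?thesis
  proof
    fix S assume "c S \<noteq> 0"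
    then obtain f where f: "f \<in> F" "f ` {0..<r} = S" "w f \<noteq> 0"
      unfolding c_def by (auto elim: sum.not_neutral_contains_not_neutral)
    have "card S = r" using card_image[OF w_inj[OF f(3)]] f(2) by simp
    moreover have "S \<subseteq> {0..<n}" using F_img f(1,2) by blast
    ultimately show "S \<subseteq> {0..<n} \<and> card S = r" by simp
  next
    fix d :: "nat \<Rightarrow> complex"
    have "det (Y * mat_diag n d * mat_adjoint Y) = (\<Sum>f\<in>F. w f * prod d (f ` {0..<r}))"
      unfolding det_congruence_diag_sum_functions[OF Y] F_def[symmetric]
    proof (intro sum.cong refl)
      fix f
      have "(\<Prod>i=0..<r. Y $$ (i, f i) * d (f i)) * det (mat\<^sub>r r r (\<lambda>i. row (mat_adjoint Y) (f i)))
          = w f * (\<Prod>i=0..<r. d (f i))"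
        unfolding w_def prod.distrib by (simp only: mult_ac)
      also have "\<dots> = w f * prod d (f ` {0..<r})"
        using w_inj[of f] prod.reindex[of f "{0..<r}" d] by (cases "w f = 0") auto
      finally show "(\<Prod>i=0..<r. Y $$ (i, f i) * d (f i)) * det (mat\<^sub>r r r (\<lambda>i. row (mat_adjoint Y) (f i)))
          = w f * prod d (f ` {0..<r})" .
    qed
    also have "\<dots> = (\<Sum>S\<in>Pow {0..<n}. \<Sum>f\<in>{f\<in>F. f ` {0..<r} = S}. w f * prod d (f ` {0..<r}))"
      by (rule sum.group[symmetric, OF F_fin _ F_img]) simp
    also have "\<dots> = (\<Sum>S\<in>Pow {0..<n}. c S * prod d S)"
      unfolding c_def sum_distrib_right by (intro sum.cong refl) simp
    finally show "det (Y * mat_diag n d * mat_adjoint Y) = (\<Sum>S\<in>Pow {0..<n}. c S * prod d S)" .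
  qed
qed

lemma sum_subsets_prod_indicator:
  fixes c :: "'a set \<Rightarrow> 'b::comm_semiring_1"
  assumes c: "\<And>T. c T \<noteq> 0 \<Longrightarrow> card T = card S" and S: "S \<subseteq> A" and A: "finite A"
  shows "(\<Sum>T\<in>Pow A. c T * (\<Prod>k\<in>T. if k \<in> S then 1 else 0)) = c S"
proof -
  have "c T * (\<Prod>k\<in>T. if k \<in> S then 1 else 0) = 0" if T: "T \<in> Pow A - {S}" for T
  proof (cases "c T = 0")
    case False
    have "finite S" "finite T" using S T A finite_subset by auto
    then have "\<not> T \<subseteq> S" using c[OF False] T card_subset_eq by blast
    then have "(\<Prod>k\<in>T. if k \<in> S then 1 else 0) = (0::'b)"
      using \<open>finite T\<close> by (intro prod_zero) auto
    then show ?thesis by simp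
  qed simp
  then have "(\<Sum>T\<in>Pow A. c T * (\<Prod>k\<in>T. if k \<in> S then 1 else 0))
      = (\<Sum>T\<in>{S}. c T * (\<Prod>k\<in>T. if k \<in> S then 1 else 0))"
    using S A by (intro sum.mono_neutral_right) auto
  then show ?thesis by simp
qed

lemma congruence_diag_indicator:
  assumes g: "bij_betw g {0..<r} S" and S: "S \<subseteq> {0..<n}"
  defines "E \<equiv> mat n r (\<lambda>(k,j). if k = g j then 1 else 0 :: complex)"
  shows "E * mat_adjoint E = mat_diag n (\<lambda>k. if k \<in> S then 1 else 0)"
proof (rule eq_matI)
  fix k l assume "k < dim_row (mat_diag n (\<lambda>k. if k \<in> S then 1 else 0 :: complex))"
    "l < dim_col (mat_diag n (\<lambda>k. if k \<in> S then 1 else 0 :: complex))"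
  then have k: "k < n" and l: "l < n" by (auto simp: mat_diag_def)
  have "(E * mat_adjoint E) $$ (k,l) = (\<Sum>j=0..<r. (if k = g j \<and> l = g j then 1 else 0))"
    using k l unfolding E_def by (auto simp: scalar_prod_def intro!: sum.cong)
  also have "\<dots> = (\<Sum>s\<in>S. (if k = s \<and> l = s then 1 else 0))"
    using sum.reindex_bij_betw[OF g, of "\<lambda>s. (if k = s \<and> l = s then 1 else 0 :: complex)"] by simp
  also have "\<dots> = mat_diag n (\<lambda>k. if k \<in> S then 1 else 0) $$ (k,l)"
    using k l finite_subset[OF S] by (auto simp: mat_diag_def)
  finally show "(E * mat_adjoint E) $$ (k,l) = mat_diag n (\<lambda>k. if k \<in> S then 1 else 0) $$ (k,l)" .
qed (auto simp: E_def mat_diag_def)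

lemma det_congruence_diag_indicator:
  fixes Y :: "complex mat"
  assumes Y: "Y \<in> carrier_mat r n" and S: "S \<subseteq> {0..<n}" "card S = r"
  obtains z where "det (Y * mat_diag n (\<lambda>k. if k \<in> S then 1 else 0) * mat_adjoint Y) = z * cnj z"
proof -
  obtain g where g: "bij_betw g {0..<r} S"
    using ex_bij_betw_nat_finite[of S] S finite_subset by (metis finite_atLeastLessThan)
  define E where "E = mat n r (\<lambda>(k,j). if k = g j then 1 else 0 :: complex)"
  have E: "E \<in> carrier_mat n r" unfolding E_def by simp
  have YE: "Y * E \<in> carrier_mat r r" using Y E by simp
  have "Y * mat_diag n (\<lambda>k. if k \<in> S then 1 else 0) * mat_adjoint Y = (Y * E) * mat_adjoint (Y * E)"
    using Y E unfolding congruence_diag_indicator[OF g S(1), folded E_def, symmetric]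
    by (simp add: mat_adjoint_mult assoc_mult_mat_dims)
  also have "det \<dots> = det (Y * E) * cnj (det (Y * E))"
    using det_mult[OF YE mat_adjoint_carrier[OF YE]] det_mat_adjoint[OF YE] by simp
  finally show ?thesis by (rule that)
qed

text \<open>In fact \<open>C S = |det Y\<^sub>S|\<^sup>2\<close>, where \<open>Y\<^sub>S\<close> consists of the columns of \<open>Y\<close> indexed
  by \<open>S\<close>; the proof only extracts this value by evaluating at the indicator function of \<open>S\<close>.\<close>
lemma det_congruence_diag_expansion:
  fixes Y :: "complex mat"
  assumes Y: "Y \<in> carrier_mat r n"
  obtains C :: "nat set \<Rightarrow> real"
  where "\<And>S. 0 \<le> C S" and "\<And>S. C S \<noteq> 0 \<Longrightarrow> card S = r"
    and "\<And>d. det (Y * mat_diag n (\<lambda>k. complex_of_real (d k)) * mat_adjoint Y)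
          = complex_of_real (\<Sum>S\<in>Pow {0..<n}. C S * prod d S)"
proof -
  obtain c where c_supp: "\<And>S. c S \<noteq> 0 \<Longrightarrow> S \<subseteq> {0..<n} \<and> card S = r"
    and c_det: "\<And>d. det (Y * mat_diag n d * mat_adjoint Y) = (\<Sum>S\<in>Pow {0..<n}. c S * prod d S)"
    using det_congruence_diag_coeffs[OF Y] by blast
  have c_real: "c S = complex_of_real (Re (c S)) \<and> 0 \<le> Re (c S)" for S
  proof (cases "c S = 0")
    case False
    then have S: "S \<subseteq> {0..<n}" "card S = r" using c_supp by auto
    obtain z where "det (Y * mat_diag n (\<lambda>k. if k \<in> S then 1 else 0) * mat_adjoint Y) = z * cnj z"
      using det_congruence_diag_indicator[OF Y S] .
    moreover have "det (Y * mat_diag n (\<lambda>k. if k \<in> S then 1 else 0) * mat_adjoint Y) = c S"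
      unfolding c_det using c_supp S by (intro sum_subsets_prod_indicator) auto
    ultimately show ?thesis by (metis complex_mult_cnj Re_complex_of_real zero_le_power2 add_nonneg_nonneg)
  qed simp
  show ?thesis
  proof
    show "0 \<le> Re (c S)" for S
      using c_real[of S] by simp
    show "card S = r" if "Re (c S) \<noteq> 0" for S
      using that c_supp[of S] by (cases "c S = 0") auto
    show "det (Y * mat_diag n (\<lambda>k. complex_of_real (d k)) * mat_adjoint Y)
        = complex_of_real (\<Sum>S\<in>Pow {0..<n}. Re (c S) * prod d S)" for d
      unfolding c_det of_real_sum of_real_mult of_real_prod using c_real by (metis (no_types))
  qed
qed

text \<open>The elements of \<open>S\<close> beyond \<open>r\<close> are traded against the missing elements below \<open>r\<close>;
  both are compared with \<open>\<rho> (r - 1)\<close>.\<close>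
lemma prod_antimono_le_prod_initial:
  fixes \<rho> :: "nat \<Rightarrow> real"
  assumes pos: "\<And>k. k < n \<Longrightarrow> 0 < \<rho> k"
    and antimono: "\<And>k l. k \<le> l \<Longrightarrow> l < n \<Longrightarrow> \<rho> l \<le> \<rho> k"
    and S: "S \<subseteq> {0..<n}" "card S = r"
  shows "prod \<rho> S \<le> prod \<rho> {0..<r}"
proof (cases "r = 0")
  case True
  then show ?thesis using S finite_subset by fastforce
next
  case False
  define c where "c = \<rho> (r - 1)"
  define A where "A = S \<inter> {0..<r}"
  define B1 where "B1 = S - {0..<r}"
  define B2 where "B2 = {0..<r} - S"
  have S_fin: "finite S" using S finite_subset by blast
  have "card S \<le> card {0..<n}" using S(1) by (intro card_mono) auto
  then have r: "r \<le> n" using S(2) by simp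
  have "S = A \<union> B1" "A \<inter> B1 = {}" "{0..<r} = A \<union> B2" "A \<inter> B2 = {}"
    unfolding A_def B1_def B2_def by auto
  then have prod_S: "prod \<rho> S = prod \<rho> A * prod \<rho> B1"
    and prod_r: "prod \<rho> {0..<r} = prod \<rho> A * prod \<rho> B2"
    using prod.union_disjoint[of A B1 \<rho>] prod.union_disjoint[of A B2 \<rho>] S_fin
    unfolding A_def B1_def B2_def by auto
  have "card B1 = r - card A" unfolding B1_def A_def using S S_fin
    by (metis Diff_Int2 card_Diff_subset_Int finite_Int inf.idem)
  moreover have "card B2 = r - card A" unfolding B2_def A_def
    by (metis Diff_Int2 card_Diff_subset_Int card_atLeastLessThan diff_zero finite_Int finite_atLeastLessThan inf.idem inf_commute)
  moreover have "prod \<rho> B1 \<le> prod (\<lambda>_. c) B1"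
  proof (rule prod_mono, intro ballI conjI)
    fix k assume "k \<in> B1"
    then have "k < n" "r - 1 \<le> k" using S unfolding B1_def by auto
    then show "0 \<le> \<rho> k" "\<rho> k \<le> c" unfolding c_def using pos antimono by (auto simp: less_imp_le)
  qed
  moreover have "prod (\<lambda>_. c) B2 \<le> prod \<rho> B2"
  proof (rule prod_mono, intro ballI conjI)
    fix k assume "k \<in> B2"
    then have "k \<le> r - 1" "r - 1 < n" using r False unfolding B2_def by auto
    then show "0 \<le> c" "c \<le> \<rho> k" unfolding c_def using pos antimono by (auto simp: less_imp_le)
  qed
  ultimately have "prod \<rho> B1 \<le> prod \<rho> B2" by simp
  moreover have "0 \<le> prod \<rho> A"
    using pos S(1) unfolding A_def by (intro prod_nonneg) (metis IntD1 atLeastLessThan_iff less_imp_le subsetD)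
  ultimately show ?thesis unfolding prod_S prod_r by (simp add: mult_left_mono)
qed

lemma sum_prod_ratio_le_prod_initial:
  fixes C :: "nat set \<Rightarrow> real" and x y :: "nat \<Rightarrow> real"
  assumes C: "\<And>S. 0 \<le> C S" "\<And>S. C S \<noteq> 0 \<Longrightarrow> card S = r"
    and y: "\<And>k. k < n \<Longrightarrow> 0 < y k" and xy: "\<And>k. k < n \<Longrightarrow> y k \<le> x k"
    and antimono: "\<And>k l. k \<le> l \<Longrightarrow> l < n \<Longrightarrow> x l / y l \<le> x k / y k"
  shows "(\<Sum>S\<in>Pow {0..<n}. C S * prod x S) \<le> (\<Prod>k<r. x k / y k) * (\<Sum>S\<in>Pow {0..<n}. C S * prod y S)"
  unfolding sum_distrib_left
proof (intro sum_mono)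
  fix S assume "S \<in> Pow {0..<n}"
  then have S: "S \<subseteq> {0..<n}" by auto
  show "C S * prod x S \<le> (\<Prod>k<r. x k / y k) * (C S * prod y S)"
  proof (cases "C S = 0")
    case False
    have "prod x S = (\<Prod>k\<in>S. x k / y k) * prod y S"
      unfolding prod.distrib[symmetric] by (intro prod.cong refl) (use S y in force)
    also have "\<dots> \<le> (\<Prod>k<r. x k / y k) * prod y S"
      using y xy antimono S C(2)[OF False] order.strict_trans2[OF y xy]
      by (intro mult_right_mono prod_antimono_le_prod_initial[of n, unfolded atLeast0LessThan] prod_nonneg)
        (auto simp: less_imp_le)
    finally show ?thesis using C(1)[of S] by (simp add: mult_left_mono algebra_simps)
  qed simp
qed

lemma mat_diag_add:
  fixes f g :: "nat \<Rightarrow> 'a::monoid_add"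
  shows "mat_diag n f + mat_diag n g = mat_diag n (\<lambda>k. f k + g k)"
  by (intro eq_matI) (auto simp: mat_diag_def)

lemma det_mat_diag: "det (mat_diag n d) = prod d {0..<n}"
proof -
  have "det (mat_diag n d) = prod_list (diag_mat (mat_diag n d))"
    by (rule det_upper_triangular) (auto simp: mat_diag_def upper_triangular_def)
  also have "diag_mat (mat_diag n d) = map d [0..<n]"
    by (auto simp: diag_mat_def mat_diag_def intro!: nth_equalityI)
  finally show ?thesis by (simp add: prod.list_conv_set_nth)
qed

lemma first_rows_mult:
  assumes "r \<le> dim_row A"
  shows "first_rows r (A * B) = first_rows r A * B"
proof (rule eq_matI)
  fix i j assume "i < dim_row (first_rows r A * B)" "j < dim_col (first_rows r A * B)"
  then have i: "i < r" and j: "j < dim_col B" by (auto simp: first_rows_def)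
  have "row (first_rows r A) i = row A i"
    using assms i by (intro eq_vecI) (auto simp: first_rows_def)
  then show "first_rows r (A * B) $$ (i, j) = (first_rows r A * B) $$ (i, j)"
    using assms i j by (simp add: first_rows_def)
qed (auto simp: first_rows_def)

lemma first_rows_one_congruence_diag:
  assumes "r \<le> n"
  shows "first_rows r (1\<^sub>m n) * mat_diag n d * mat_adjoint (first_rows r (1\<^sub>m n)) = mat_diag r (d :: nat \<Rightarrow> complex)"
proof -
  have "first_rows r (1\<^sub>m n) * mat_diag n d = mat r n (\<lambda>(k,l). if k = l then d k else 0)"
    using assms by (subst mat_diag_mult_right[of _ r]) (auto simp: first_rows_def intro!: eq_matI)
  moreover have "(\<Sum>i = 0..<n. (if k = i then d k else 0) * cnj (if l = i then 1 else 0))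
      = (if k = l then d k else 0)" if "k < r" for k l
  proof -
    have "(\<Sum>i = 0..<n. (if k = i then d k else 0) * cnj (if l = i then 1 else 0))
        = (\<Sum>i = 0..<n. if i = k then (if l = k then d k else 0) else 0)"
      by (intro sum.cong) auto
    then show ?thesis using that assms by simp
  qed
  ultimately show ?thesis
    using assms by (intro eq_matI) (auto simp: first_rows_def mat_diag_def scalar_prod_def)
qed

lemma first_rows_full_rank:
  fixes M N :: "complex mat"
  assumes M: "M \<in> carrier_mat n n" and N: "N \<in> carrier_mat n n" and MN: "M * N = 1\<^sub>m n"
    and r: "r \<le> n"
  shows "vec_space.rank r (first_rows r M) = r"
proof (rule vec_space.right_invertible_full_rank)
  define E where "E = first_rows r (1\<^sub>m n :: complex mat)"
  have E: "E \<in> carrier_mat r n" unfolding E_def first_rows_def by simp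
  have "first_rows r M = E * M" unfolding E_def using first_rows_mult[of r "1\<^sub>m n" M] M r by simp
  then show "first_rows r M \<in> carrier_mat r n" using E M by simp
  show "N * mat_adjoint E \<in> carrier_mat n r" using N E by simp
  show "first_rows r M * (N * mat_adjoint E) = 1\<^sub>m r"
    unfolding \<open>first_rows r M = E * M\<close> using E M N first_rows_one_congruence_diag[OF r, of "\<lambda>_. 1"]
    by (simp add: assoc_mult_mat_dims mult_inverse_cancel_left[OF MN] E_def)
qed

section \<open>Simultaneous diagonalization\<close>

lemma mat_adjoint_mult_diagonal_real:
  fixes S :: "complex mat"
  assumes S: "S \<in> carrier_mat n n" and diag: "diagonal_mat S" and real: "\<forall>k<n. S $$ (k,k) \<in> \<real>"
  shows "mat_adjoint S * S = mat_diag n (\<lambda>k. complex_of_real ((Re (S $$ (k,k)))\<^sup>2))"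
proof (rule eq_matI)
  fix k l assume "k < dim_row (mat_diag n (\<lambda>k. complex_of_real ((Re (S $$ (k,k)))\<^sup>2)))"
    "l < dim_col (mat_diag n (\<lambda>k. complex_of_real ((Re (S $$ (k,k)))\<^sup>2)))"
  then have k: "k < n" and l: "l < n" by (auto simp: mat_diag_def)
  have off: "S $$ (a,b) = 0" if "a < n" "b < n" "a \<noteq> b" for a b
    using diag S that unfolding diagonal_mat_def by auto
  have "(mat_adjoint S * S) $$ (k,l) = (\<Sum>m=0..<n. cnj (S $$ (m,k)) * S $$ (m,l))"
    using S k l by (simp add: scalar_prod_def)
  also have "\<dots> = (\<Sum>m=0..<n. if m = k then cnj (S $$ (k,k)) * S $$ (k,l) else 0)"
    by (intro sum.cong refl) (use off k in auto)
  also have "\<dots> = mat_diag n (\<lambda>k. complex_of_real ((Re (S $$ (k,k)))\<^sup>2)) $$ (k,l)"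
    using k l off real by (auto simp: mat_diag_def power2_eq_square elim!: Reals_cases)
  finally show "(mat_adjoint S * S) $$ (k,l) = mat_diag n (\<lambda>k. complex_of_real ((Re (S $$ (k,k)))\<^sup>2)) $$ (k,l)" .
qed (use S in \<open>auto simp: mat_diag_def\<close>)

lemma svd_gram_diag:
  fixes A U S V :: "complex mat"
  assumes svd: "is_svd n A U S V"
  shows "mat_adjoint V * (mat_adjoint A * A) * V = mat_diag n (\<lambda>k. complex_of_real ((Re (S $$ (k,k)))\<^sup>2))"
proof -
  have U: "U \<in> carrier_mat n n" and V: "V \<in> carrier_mat n n" and S: "S \<in> carrier_mat n n"
    and UU: "mat_adjoint U * U = 1\<^sub>m n" and VV: "mat_adjoint V * V = 1\<^sub>m n"
    and A: "A = U * S * mat_adjoint V"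
    using svd unfolding is_svd_def unitary_mat_def by auto
  have "mat_adjoint V * (mat_adjoint A * A) * V
      = (mat_adjoint V * V) * mat_adjoint S * (mat_adjoint U * U) * S * (mat_adjoint V * V)"
    unfolding A mat_adjoint_mult3[OF U S mat_adjoint_carrier[OF V]] using U S V
    by (simp add: assoc_mult_mat_dims)
  also have "\<dots> = mat_adjoint S * S" using UU VV S by simp
  finally show ?thesis using mat_adjoint_mult_diagonal_real[OF S] svd unfolding is_svd_def by simp
qed

text \<open>\<open>M = V\<^sup>H T\<^sup>-\<^sup>1\<close> whitens \<open>Q = T\<^sup>2\<close>, and \<open>M Qi M\<^sup>H = V\<^sup>H A\<^sup>H A V\<close> for \<open>A = Si T\<^sup>-\<^sup>1\<close>.\<close>
lemma svd_simultaneous_diagonalization: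
  fixes T Si U S V :: "complex mat"
  assumes T: "hermitian_mat n T" "T * T = Q" and Q: "det Q \<noteq> 0"
    and Si: "hermitian_mat n Si" "Si * Si = Qi"
    and svd: "is_svd n (Si * mat_inv T) U S V"
  defines "M \<equiv> mat_adjoint V * mat_inv T"
  shows "M \<in> carrier_mat n n" and "T * V \<in> carrier_mat n n"
    and "M * (T * V) = 1\<^sub>m n" and "(T * V) * M = 1\<^sub>m n"
    and "M * Q * mat_adjoint M = 1\<^sub>m n"
    and "M * Qi * mat_adjoint M = mat_diag n (\<lambda>k. complex_of_real ((Re (S $$ (k,k)))\<^sup>2))"
proof -
  define Ti where "Ti = mat_inv T"
  have Tc: "T \<in> carrier_mat n n" and Sic: "Si \<in> carrier_mat n n" and Si_adj: "mat_adjoint Si = Si"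
    using T Si unfolding hermitian_mat_def by auto
  have "det T \<noteq> 0" using Q det_mult[OF Tc Tc] T(2) by auto
  note inv = mat_inv_nonsingular[OF Tc this, folded Ti_def]
  have Ti_adj: "mat_adjoint Ti = Ti"
    unfolding Ti_def by (rule mat_adjoint_mat_inv_hermitian[OF T(1) \<open>det T \<noteq> 0\<close>])
  have Vc: "V \<in> carrier_mat n n" and VV: "mat_adjoint V * V = 1\<^sub>m n"
    using svd unfolding is_svd_def unitary_mat_def by auto
  have VV': "V * mat_adjoint V = 1\<^sub>m n"
    by (rule mat_mult_left_right_inverse[OF mat_adjoint_carrier[OF Vc] Vc VV])
  show "M \<in> carrier_mat n n" unfolding M_def Ti_def[symmetric] using Vc inv(1) by auto
  show "T * V \<in> carrier_mat n n" using Tc Vc by simp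
  have M_adj: "mat_adjoint M = Ti * V"
    unfolding M_def Ti_def[symmetric] using mat_adjoint_mult[OF mat_adjoint_carrier[OF Vc] inv(1)] Ti_adj
    by simp
  show "M * (T * V) = 1\<^sub>m n" "(T * V) * M = 1\<^sub>m n"
    unfolding M_def Ti_def[symmetric] using Tc Vc inv VV VV'
    by (simp_all add: assoc_mult_mat_dims mult_inverse_cancel_left[OF inv(3)]
        mult_inverse_cancel_left[OF VV'])
  show "M * Q * mat_adjoint M = 1\<^sub>m n"
    unfolding M_adj unfolding M_def Ti_def[symmetric] T(2)[symmetric] using Tc Vc inv VV
    by (simp add: assoc_mult_mat_dims mult_inverse_cancel_left[OF inv(2)]
        mult_inverse_cancel_left[OF inv(3)])
  have "mat_adjoint (Si * Ti) = Ti * Si" using mat_adjoint_mult[OF Sic inv(1)] Ti_adj Si_adj by simp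
  then have "M * Qi * mat_adjoint M = mat_adjoint V * (mat_adjoint (Si * Ti) * (Si * Ti)) * V"
    unfolding M_adj unfolding M_def Ti_def[symmetric] Si(2)[symmetric] using Vc Sic inv(1)
    by (simp add: assoc_mult_mat_dims)
  then show "M * Qi * mat_adjoint M = mat_diag n (\<lambda>k. complex_of_real ((Re (S $$ (k,k)))\<^sup>2))"
    using svd_gram_diag[OF svd[folded Ti_def]] by simp
qed

lemma is_svd_singular_values_sq_antimono:
  assumes "is_svd n A U S V" "k \<le> l" "l < n"
  shows "(Re (S $$ (l,l)))\<^sup>2 \<le> (Re (S $$ (k,k)))\<^sup>2"
  using assms unfolding is_svd_def by (auto intro!: power_mono)

lemma congruence_one_minus_smult_diag:
  fixes M X Z :: "complex mat"
  assumes M: "M \<in> carrier_mat n n" and X: "X \<in> carrier_mat n n" and Z: "Z \<in> carrier_mat n n"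
    and MX: "M * X * mat_adjoint M = 1\<^sub>m n"
    and MZ: "M * Z * mat_adjoint M = mat_diag n (\<lambda>k. complex_of_real (\<sigma> k))"
  shows "M * (X - complex_of_real a \<cdot>\<^sub>m Z) * mat_adjoint M = mat_diag n (\<lambda>k. complex_of_real (1 - a * \<sigma> k))"
proof -
  have "M * (X - complex_of_real a \<cdot>\<^sub>m Z) * mat_adjoint M
      = M * X * mat_adjoint M - complex_of_real a \<cdot>\<^sub>m (M * Z * mat_adjoint M)"
  proof -
    have "M * (X - complex_of_real a \<cdot>\<^sub>m Z) = M * X - complex_of_real a \<cdot>\<^sub>m (M * Z)"
      using M X Z by (simp add: mult_minus_distrib_mat[of M n n] mult_smult_distrib[of M n n])
    then show ?thesis
      by (simp add: minus_mult_distrib_mat[OF mult_carrier_mat[OF M X]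
            smult_carrier_mat[OF mult_carrier_mat[OF M Z]] mat_adjoint_carrier[OF M]]
          mult_smult_assoc_mat[OF mult_carrier_mat[OF M Z] mat_adjoint_carrier[OF M]])
  qed
  then show ?thesis unfolding MX MZ by (intro eq_matI) (auto simp: mat_diag_def)
qed

section \<open>The capacity bound\<close>

lemma cap_bound_eq_log_det_ratio:
  fixes G Qi Ri :: "complex mat"
  assumes G: "G \<in> carrier_mat r n" and Qi: "Qi \<in> carrier_mat n n" and Ri: "Ri \<in> carrier_mat n n"
    and det: "det (G * Ri * mat_adjoint G) \<noteq> 0"
  shows "cap_bound r Qi Ri G
    = log 2 (Re (det (G * (Ri + Qi) * mat_adjoint G) / det (G * Ri * mat_adjoint G)))"
proof -
  define R where "R = G * Ri * mat_adjoint G"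
  define P where "P = G * Qi * mat_adjoint G"
  have R: "R \<in> carrier_mat r r" and P: "P \<in> carrier_mat r r"
    unfolding R_def P_def using G Qi Ri by auto
  note inv = mat_inv_nonsingular[OF R det[folded R_def]]
  have "1\<^sub>m r + P * mat_inv R = (R + P) * mat_inv R"
    using inv R P by (simp add: add_mult_distrib_mat[of _ r r])
  moreover have "det (mat_inv R) = 1 / det R"
    using det_mult[OF R inv(1)] inv(2) det[folded R_def] by (simp add: field_simps)
  ultimately have "det (1\<^sub>m r + P * mat_inv R) = det (R + P) / det R"
    using det_mult[OF add_carrier_mat[OF P] inv(1), of R] by simp
  moreover have "R + P = G * (Ri + Qi) * mat_adjoint G"
    unfolding R_def P_def mult_add_distrib_mat[OF G Ri Qi]
    by (rule add_mult_distrib_mat[symmetric, OF mult_carrier_mat[OF G Ri] mult_carrier_mat[OF G Qi]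
          mat_adjoint_carrier[OF G]])
  ultimately show ?thesis
    unfolding cap_bound_def R_def[symmetric] P_def[symmetric] by simp
qed

lemma cap_bound_congruence:
  fixes Y M Qi Ri :: "complex mat"
  assumes "Y \<in> carrier_mat r n" "M \<in> carrier_mat n n" "Qi \<in> carrier_mat n n" "Ri \<in> carrier_mat n n"
  shows "cap_bound r Qi Ri (Y * M) = cap_bound r (M * Qi * mat_adjoint M) (M * Ri * mat_adjoint M) Y"
  unfolding cap_bound_def congruence_mult[OF assms(1-3)] congruence_mult[OF assms(1,2,4)] ..

lemma cap_bound_diag_le:
  fixes Y :: "complex mat" and y \<sigma> :: "nat \<Rightarrow> real"
  assumes Y: "Y \<in> carrier_mat r n"
    and y: "\<And>k. k < n \<Longrightarrow> 0 < y k" and \<sigma>: "\<And>k. k < n \<Longrightarrow> 0 \<le> \<sigma> k"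
    and antimono: "\<And>k l. k \<le> l \<Longrightarrow> l < n \<Longrightarrow> \<sigma> l / y l \<le> \<sigma> k / y k"
    and det: "det (Y * mat_diag n (\<lambda>k. complex_of_real (y k)) * mat_adjoint Y) \<noteq> 0"
  shows "cap_bound r (mat_diag n (\<lambda>k. complex_of_real (\<sigma> k))) (mat_diag n (\<lambda>k. complex_of_real (y k))) Y
    \<le> log 2 (\<Prod>k<r. (y k + \<sigma> k) / y k)"
proof -
  define x where "x k = y k + \<sigma> k" for k
  obtain C where C: "\<And>S. 0 \<le> C S" "\<And>S. C S \<noteq> 0 \<Longrightarrow> card S = r"
    and C_det: "\<And>d. det (Y * mat_diag n (\<lambda>k. complex_of_real (d k)) * mat_adjoint Y)
          = complex_of_real (\<Sum>S\<in>Pow {0..<n}. C S * prod d S)"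
    using det_congruence_diag_expansion[OF Y] by blast
  define Dy where "Dy = (\<Sum>S\<in>Pow {0..<n}. C S * prod y S)"
  define Dx where "Dx = (\<Sum>S\<in>Pow {0..<n}. C S * prod x S)"
  have xy: "y k \<le> x k" if "k < n" for k using \<sigma>[OF that] unfolding x_def by simp
  have "Dy \<le> Dx"
    unfolding Dy_def Dx_def using C(1) y xy
    by (intro sum_mono mult_left_mono prod_mono) (auto simp: less_imp_le)
  moreover have "0 \<le> Dy"
    unfolding Dy_def using C(1) y
    by (intro sum_nonneg mult_nonneg_nonneg prod_nonneg) (auto simp: less_imp_le)
  moreover have "Dy \<noteq> 0" using det C_det[of y] unfolding Dy_def[symmetric] by auto
  moreover have "Dx \<le> (\<Prod>k<r. x k / y k) * Dy"
    unfolding Dx_def Dy_def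
  proof (rule sum_prod_ratio_le_prod_initial[OF C y xy])
    show "x l / y l \<le> x k / y k" if "k \<le> l" "l < n" for k l
      using antimono[OF that] y[of k] y[of l] that unfolding x_def by (simp add: add_divide_distrib)
  qed
  ultimately have "0 < Dx / Dy" "Dx / Dy \<le> (\<Prod>k<r. x k / y k)"
    by (auto simp: pos_divide_le_eq)
  have "cap_bound r (mat_diag n (\<lambda>k. complex_of_real (\<sigma> k))) (mat_diag n (\<lambda>k. complex_of_real (y k))) Y
      = log 2 (Re (det (Y * mat_diag n (\<lambda>k. complex_of_real (x k)) * mat_adjoint Y)
          / det (Y * mat_diag n (\<lambda>k. complex_of_real (y k)) * mat_adjoint Y)))"
    unfolding cap_bound_eq_log_det_ratio[OF Y mat_diag_dim mat_diag_dim det] mat_diag_add x_def by simp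
  also have "\<dots> = log 2 (Dx / Dy)"
    unfolding C_det Dx_def Dy_def by (simp only: of_real_divide[symmetric] Re_complex_of_real)
  also have "\<dots> \<le> log 2 (\<Prod>k<r. x k / y k)"
    using \<open>0 < Dx / Dy\<close> \<open>Dx / Dy \<le> (\<Prod>k<r. x k / y k)\<close> by simp
  finally show ?thesis unfolding x_def .
qed

lemma cap_bound_diag_first_rows:
  fixes y \<sigma> :: "nat \<Rightarrow> real"
  assumes r: "r \<le> n" and y: "\<And>k. k < n \<Longrightarrow> 0 < y k"
  shows "cap_bound r (mat_diag n (\<lambda>k. complex_of_real (\<sigma> k))) (mat_diag n (\<lambda>k. complex_of_real (y k)))
      (first_rows r (1\<^sub>m n)) = log 2 (\<Prod>k<r. (y k + \<sigma> k) / y k)"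
proof -
  define E where "E = first_rows r (1\<^sub>m n :: complex mat)"
  have E: "E \<in> carrier_mat r n" unfolding E_def first_rows_def by simp
  have det_E: "det (E * mat_diag n d * mat_adjoint E) = (\<Prod>k<r. d k)" for d
    unfolding E_def first_rows_one_congruence_diag[OF r] det_mat_diag by (simp add: atLeast0LessThan)
  have det: "det (E * mat_diag n (\<lambda>k. complex_of_real (y k)) * mat_adjoint E) \<noteq> 0"
    unfolding det_E using y r by (simp add: less_imp_neq[symmetric])
  show ?thesis
    unfolding E_def[symmetric] cap_bound_eq_log_det_ratio[OF E mat_diag_dim mat_diag_dim det] mat_diag_add det_E
    by (simp only: of_real_prod[symmetric] of_real_add[symmetric] of_real_divide[symmetric]
        Re_complex_of_real prod_dividef)
qed

text \<open>The hypothesis \<open>order\<close> says that the generalized eigenvalues \<open>\<sigma> k / y k\<close> are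
  nonincreasing, stated without division.\<close>
lemma cap_bound_le_first_rows:
  fixes M N Qi Ri G :: "complex mat" and y \<sigma> :: "nat \<Rightarrow> real"
  assumes M: "M \<in> carrier_mat n n" and N: "N \<in> carrier_mat n n"
    and MN: "M * N = 1\<^sub>m n" and NM: "N * M = 1\<^sub>m n"
    and Ri: "loewner_ge_one n Ri" and Qi: "Qi \<in> carrier_mat n n"
    and M_Ri: "M * Ri * mat_adjoint M = mat_diag n (\<lambda>k. complex_of_real (y k))"
    and M_Qi: "M * Qi * mat_adjoint M = mat_diag n (\<lambda>k. complex_of_real (\<sigma> k))"
    and \<sigma>: "\<And>k. k < n \<Longrightarrow> 0 \<le> \<sigma> k"
    and order: "\<And>k l. k \<le> l \<Longrightarrow> l < n \<Longrightarrow> \<sigma> l * y k \<le> \<sigma> k * y l"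
    and r: "r \<le> n"
    and G: "G \<in> carrier_mat r n" and rk: "vec_space.rank r G = r"
  shows "cap_bound r Qi Ri G \<le> cap_bound r Qi Ri (first_rows r M)"
proof -
  have Ric: "Ri \<in> carrier_mat n n" using Ri unfolding loewner_ge_one_def by simp
  have E: "first_rows r (1\<^sub>m n) \<in> carrier_mat r n" unfolding first_rows_def by simp
  have y: "0 < y k" if k: "k < n" for k
    using loewner_ge_one_congruence_diag_pos[OF Ri M k row_nonzero_right_invertible[OF M N MN k]] k
    unfolding M_Ri by (simp add: mat_diag_def)
  have antimono: "\<sigma> l / y l \<le> \<sigma> k / y k" if "k \<le> l" "l < n" for k l
    using order[OF that] y[of k] y[of l] that by (simp add: field_simps)
  define Y where "Y = G * N"
  have Y: "Y \<in> carrier_mat r n" unfolding Y_def using G N by simp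
  have YM: "Y * M = G" unfolding Y_def using G N M NM by (simp add: assoc_mult_mat[of G r n N n M n])
  have "det (Y * mat_diag n (\<lambda>k. complex_of_real (y k)) * mat_adjoint Y) \<noteq> 0"
    using loewner_ge_one_congruence_det_nonzero[OF Ri G rk]
    unfolding M_Ri[symmetric] congruence_mult[OF Y M Ric, symmetric] YM .
  then have "cap_bound r Qi Ri G \<le> log 2 (\<Prod>k<r. (y k + \<sigma> k) / y k)"
    using cap_bound_diag_le[where y = y and \<sigma> = \<sigma>, OF Y y \<sigma> antimono]
    unfolding YM[symmetric] cap_bound_congruence[OF Y M Qi Ric] M_Ri M_Qi by simp
  also have "\<dots> = cap_bound r Qi Ri (first_rows r (1\<^sub>m n) * M)"
    unfolding cap_bound_congruence[OF E M Qi Ric] M_Ri M_Qi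
    by (rule cap_bound_diag_first_rows[where y = y and \<sigma> = \<sigma>, OF r y, symmetric])
  also have "first_rows r (1\<^sub>m n) * M = first_rows r M"
    using first_rows_mult[of r "1\<^sub>m n" M] M r by simp
  finally show ?thesis .
qed

theorem lemma1:
  fixes Nrx NUE r i :: nat
    and Qs :: "nat \<Rightarrow> complex mat"
    and \<alpha> :: "nat \<Rightarrow> real"
    and Q Ri Si T U S V :: "complex mat"
  assumes "Nrx \<ge> 1" and "NUE \<ge> 1"
    and "1 \<le> r" and "r \<le> Nrx"
    and "i < NUE"
    and "\<And>j. j < NUE \<Longrightarrow> psd_mat Nrx (Qs j)"
    and "\<And>j. j < NUE \<Longrightarrow> \<alpha> j > 0"
    and Q_def: "Q = 1\<^sub>m Nrx + mat Nrx Nrx (\<lambda>(k,l). \<Sum>j<NUE. complex_of_real (\<alpha> j) * Qs j $$ (k,l))"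
    and Ri_def: "Ri = Q - complex_of_real (\<alpha> i) \<cdot>\<^sub>m Qs i"
    and "is_psd_sqrt Nrx Si (Qs i)"
    and "is_psd_sqrt Nrx T Q"
    and "is_svd Nrx (Si * mat_inv T) U S V"
  shows "first_rows r (mat_adjoint V) * mat_inv T \<in> carrier_mat r Nrx
       \<and> vec_space.rank r (first_rows r (mat_adjoint V) * mat_inv T) = r
       \<and> (\<forall>G \<in> carrier_mat r Nrx. vec_space.rank r G = r \<longrightarrow>
            cap_bound r (Qs i) Ri G
              \<le> cap_bound r (Qs i) Ri (first_rows r (mat_adjoint V) * mat_inv T))"
proof -
  define \<sigma> where "\<sigma> k = (Re (S $$ (k,k)))\<^sup>2" for k
  have Q: "loewner_ge_one Nrx Q"
    unfolding Q_def by (rule loewner_ge_one_weighted_sum) (use assms(6,7) in \<open>auto simp: less_imp_le\<close>)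
  have Ri: "loewner_ge_one Nrx Ri"
    unfolding Ri_def Q_def
    by (rule loewner_ge_one_weighted_sum_remove) (use assms(5-7) in \<open>auto simp: less_imp_le\<close>)
  have T: "hermitian_mat Nrx T" "T * T = Q" and Si: "hermitian_mat Nrx Si" "Si * Si = Qs i"
    using assms(10,11) unfolding is_psd_sqrt_def psd_mat_def by auto
  define M where "M = mat_adjoint V * mat_inv T"
  note M = svd_simultaneous_diagonalization[OF T loewner_ge_one_det_nonzero[OF Q] Si assms(12),
      folded M_def \<sigma>_def]
  have Qc: "Q \<in> carrier_mat Nrx Nrx" and Qic: "Qs i \<in> carrier_mat Nrx Nrx"
    using Q assms(5,6) unfolding loewner_ge_one_def psd_mat_def hermitian_mat_def by auto
  have M_Ri: "M * Ri * mat_adjoint M = mat_diag Nrx (\<lambda>k. complex_of_real (1 - \<alpha> i * \<sigma> k))"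
    unfolding Ri_def by (rule congruence_one_minus_smult_diag[OF M(1) Qc Qic M(5,6)])
  have \<sigma>: "0 \<le> \<sigma> k" for k unfolding \<sigma>_def by simp
  have order: "\<sigma> l * (1 - \<alpha> i * \<sigma> k) \<le> \<sigma> k * (1 - \<alpha> i * \<sigma> l)" if "k \<le> l" "l < Nrx" for k l
    using is_svd_singular_values_sq_antimono[OF assms(12) that, folded \<sigma>_def] by (simp add: algebra_simps)
  have "V \<in> carrier_mat Nrx Nrx" using assms(12) unfolding is_svd_def unitary_mat_def by blast
  then have "first_rows r (mat_adjoint V) * mat_inv T = first_rows r M"
    unfolding M_def using first_rows_mult[of r "mat_adjoint V" "mat_inv T"] assms(4) by simp
  moreover have "first_rows r M \<in> carrier_mat r Nrx" using M(1) by (simp add: first_rows_def)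
  ultimately show ?thesis
    using first_rows_full_rank[OF M(1-3) assms(4)]
      cap_bound_le_first_rows[OF M(1-4) Ri Qic M_Ri M(6) \<sigma> order assms(4)] by simp
qed

end
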